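(* Let $S=\{x_1,\dots,x_N\}$ satisfy A1, and let $\ell$ be differentiable with $\ell'<0$ everywhere. Let $B$ be a uniformly random subset of $S$ of size $b$. Then for every $w\in\mathbb{R}^d$, $$\|\nabla\mathcal{L}(w)\|^2\le\mathbb{E}_B\|\nabla\mathcal{L}_B(w)\|^2\le\frac{N\sigma_{\max}^2}{\gamma^2b}\|\nabla\mathcal{L}(w)\|^2.$$
   Context: Data $x_i\in\mathbb{R}^d$ (labels absorbed). $\mathcal{L}(w)=\frac1N\sum_i\ell(\langle w,x_i\rangle)$ and $\mathcal{L}_B(w)=\frac1b\sum_{x\in B}\ell(\langle w,x\rangle)$. $\sigma_{\max}$ is the spectral norm of the matrix $(x_1,\dots,x_N)$. A1: there is $w$ with $\langle w,x_i\rangle>0$ for all $i$. Max-margin: $\hat w=\arg\min\{\|w\|^2:\langle w,x_i\rangle\ge1\ \forall i\}$ and $\gamma=1/\|\hat w\|$. *)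

theory Defs
  imports "HOL-Analysis.Analysis" "HOL-Probability.Probability"
begin

definition grad :: "('a::euclidean_space \<Rightarrow> real) \<Rightarrow> 'a \<Rightarrow> 'a" where
  "grad f w = (THE g. (f has_derivative (\<lambda>h. g \<bullet> h)) (at w))"

definition full_loss :: "(real \<Rightarrow> real) \<Rightarrow> (nat \<Rightarrow> 'a::euclidean_space) \<Rightarrow> nat \<Rightarrow> 'a \<Rightarrow> real" where
  "full_loss l x N w = (1 / real N) * (\<Sum>i<N. l (w \<bullet> x i))"

definition batch_loss :: "(real \<Rightarrow> real) \<Rightarrow> (nat \<Rightarrow> 'a::euclidean_space) \<Rightarrow> nat \<Rightarrow> nat set \<Rightarrow> 'a \<Rightarrow> real" where
  "batch_loss l x b B w = (1 / real b) * (\<Sum>i\<in>B. l (w \<bullet> x i))"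

text \<open>Spectral norm of the matrix with columns x 0, ..., x (N-1), i.e. the operator norm
  of c \<mapsto> \<Sum>i<N. c i x i from (R^N, l2) to R^d.\<close>
definition sigma_max :: "(nat \<Rightarrow> 'a::euclidean_space) \<Rightarrow> nat \<Rightarrow> real" where
  "sigma_max x N = Sup {norm (\<Sum>i<N. c i *\<^sub>R x i) | c. (\<Sum>i<N. (c i)\<^sup>2) \<le> 1}"

definition max_margin :: "(nat \<Rightarrow> 'a::euclidean_space) \<Rightarrow> nat \<Rightarrow> 'a" where
  "max_margin x N = (THE w. (\<forall>i<N. w \<bullet> x i \<ge> 1) \<and>
      (\<forall>v. (\<forall>i<N. v \<bullet> x i \<ge> 1) \<longrightarrow> (norm w)\<^sup>2 \<le> (norm v)\<^sup>2))"

definition margin :: "(nat \<Rightarrow> 'a::euclidean_space) \<Rightarrow> nat \<Rightarrow> real" where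
  "margin x N = 1 / norm (max_margin x N)"

definition batches :: "nat \<Rightarrow> nat \<Rightarrow> nat set set" where
  "batches N b = {B. B \<subseteq> {..<N} \<and> card B = b}"

end

theory Submission imports Defs begin

(* Write d_i = l'(w.x_i) < 0, so that grad L(w) = (1/N) sum_i d_i x_i and
   grad L_B(w) = (1/b) sum_{i in B} d_i x_i.  Every index lies in the same number of batches,
   hence the batch gradient is an unbiased estimate of the full gradient and the lower bound is
   Jensen's inequality for the squared norm.  For the upper bound, the spectral norm gives
   |grad L_B(w)|^2 <= sigma^2/b^2 sum_{i in B} d_i^2, whose average over batches is
   sigma^2/(bN) sum_i d_i^2.  As all d_i have the same sign and the max-margin vector u
   satisfies u.x_i >= 1,
     sum_i d_i^2 <= (sum_i |d_i|)^2 <= (sum_i |d_i| u.x_i)^2 <= |u|^2 N^2 |grad L(w)|^2,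
   and |u| = 1/gamma. *)

lemma grad_eqI:
  fixes f :: "'a::euclidean_space \<Rightarrow> real"
  assumes "(f has_derivative (\<lambda>h. g \<bullet> h)) (at w)"
  shows "grad f w = g"
  unfolding grad_def
proof (rule the_equality)
  fix g' assume "(f has_derivative (\<lambda>h. g' \<bullet> h)) (at w)"
  then have "(\<lambda>h. g \<bullet> h) = (\<lambda>h. g' \<bullet> h)" using has_derivative_unique assms by blast
  then have "(g - g') \<bullet> (g - g') = 0" by (metis inner_diff_left right_minus_eq)
  then show "g' = g" by simp
qed (rule assms)

lemma grad_scaled_sum_comp_inner:
  fixes x :: "nat \<Rightarrow> 'a::euclidean_space"
  assumes diff: "\<And>t. l differentiable (at t)"
  shows "grad (\<lambda>w. c * (\<Sum>i\<in>I. l (w \<bullet> x i))) w = c *\<^sub>R (\<Sum>i\<in>I. deriv l (w \<bullet> x i) *\<^sub>R x i)"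
proof (rule grad_eqI)
  have l_deriv: "(l has_derivative (\<lambda>h. deriv l t * h)) (at t)" for t
    using diff DERIV_deriv_iff_real_differentiable has_field_derivative_imp_has_derivative by blast
  have "((\<lambda>w. l (w \<bullet> x i)) has_derivative (\<lambda>h. deriv l (w \<bullet> x i) * (h \<bullet> x i))) (at w)" for i
  proof -
    have "((\<lambda>w. w \<bullet> x i) has_derivative (\<lambda>h. h \<bullet> x i)) (at w)"
      by (intro derivative_eq_intros) auto
    from diff_chain_at[OF this l_deriv] show ?thesis by (simp add: o_def)
  qed
  then have "((\<lambda>w. c * (\<Sum>i\<in>I. l (w \<bullet> x i))) has_derivative
               (\<lambda>h. c * (\<Sum>i\<in>I. deriv l (w \<bullet> x i) * (h \<bullet> x i)))) (at w)"
    by (intro has_derivative_mult_right has_derivative_sum)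
  moreover have "(\<lambda>h. c * (\<Sum>i\<in>I. deriv l (w \<bullet> x i) * (h \<bullet> x i)))
                   = (\<lambda>h. (c *\<^sub>R (\<Sum>i\<in>I. deriv l (w \<bullet> x i) *\<^sub>R x i)) \<bullet> h)"
    by (auto simp: inner_sum_left inner_sum_right inner_commute)
  ultimately show "((\<lambda>w. c * (\<Sum>i\<in>I. l (w \<bullet> x i))) has_derivative
                     (\<lambda>h. (c *\<^sub>R (\<Sum>i\<in>I. deriv l (w \<bullet> x i) *\<^sub>R x i)) \<bullet> h)) (at w)"
    by simp
qed

lemma finite_batches: "finite (batches N b)"
  by (rule finite_subset[of _ "Pow {..<N}"]) (auto simp: batches_def)

lemma card_batches: "card (batches N b) = N choose b"
  using n_subsets[of "{..<N}" b] by (simp add: batches_def)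

lemma batches_nonempty: "b \<le> N \<Longrightarrow> batches N b \<noteq> {}"
  by (auto simp: batches_def intro!: exI[of _ "{..<b}"])

lemma card_batches_containing:
  assumes "i < N" "1 \<le> b"
  shows "card {B \<in> batches N b. i \<in> B} = (N - 1) choose (b - 1)"
proof -
  let ?A = "{C. C \<subseteq> {..<N} - {i} \<and> card C = b - 1}"
  have "{B \<in> batches N b. i \<in> B} = insert i ` ?A"
  proof (intro set_eqI iffI)
    fix B assume B: "B \<in> {B \<in> batches N b. i \<in> B}"
    then have "B - {i} \<in> ?A"
      by (auto simp: batches_def intro: finite_subset)
    moreover have "B = insert i (B - {i})" using B by auto
    ultimately show "B \<in> insert i ` ?A" by blast
  next
    fix B assume "B \<in> insert i ` ?A"
    then obtain C where C: "C \<in> ?A" "B = insert i C" by blast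
    then have "finite C" "i \<notin> C" by (auto intro: finite_subset)
    with C assms show "B \<in> {B \<in> batches N b. i \<in> B}" by (auto simp: batches_def)
  qed
  moreover have "inj_on (insert i) ?A"
    by (rule inj_onI) (metis Diff_insert_absorb Diff_iff insertI1 subset_iff mem_Collect_eq)
  ultimately have "card {B \<in> batches N b. i \<in> B} = card ?A" by (simp add: card_image)
  also have "\<dots> = (N - 1) choose (b - 1)" using n_subsets[of "{..<N} - {i}" "b - 1"] assms by simp
  finally show ?thesis .
qed

lemma sum_batches_sum:
  fixes f :: "nat \<Rightarrow> 'a::real_vector"
  assumes "1 \<le> b" "b \<le> N"
  shows "(\<Sum>B\<in>batches N b. \<Sum>i\<in>B. f i)
           = (real (card (batches N b)) * real b / real N) *\<^sub>R (\<Sum>i<N. f i)"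
proof -
  have ratio: "real ((N - 1) choose (b - 1)) = real (card (batches N b)) * real b / real N"
    using times_binomial_minus1_eq[of b N] assms unfolding card_batches
    by (simp add: field_simps flip: of_nat_mult)
  have "(\<Sum>B\<in>batches N b. \<Sum>i\<in>B. f i) = (\<Sum>B\<in>batches N b. \<Sum>i\<in>{i. i \<in> {..<N} \<and> i \<in> B}. f i)"
    by (intro sum.cong refl arg_cong[where f="\<lambda>B. sum f B"]) (auto simp: batches_def)
  also have "\<dots> = (\<Sum>i<N. \<Sum>B\<in>{B. B \<in> batches N b \<and> i \<in> B}. f i)"
    by (rule sum.swap_restrict) (auto simp: finite_batches)
  also have "\<dots> = (\<Sum>i<N. real ((N - 1) choose (b - 1)) *\<^sub>R f i)"
    using card_batches_containing[OF _ assms(1)] by (auto simp: sum_constant_scaleR intro!: sum.cong)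
  finally show ?thesis unfolding ratio scaleR_sum_right .
qed

lemma bdd_above_sigma_max_set:
  fixes x :: "nat \<Rightarrow> 'a::real_normed_vector"
  shows "bdd_above {norm (\<Sum>i<N. c i *\<^sub>R x i) | c. (\<Sum>i<N. (c i)\<^sup>2) \<le> 1}"
proof (rule bdd_aboveI)
  fix y assume "y \<in> {norm (\<Sum>i<N. c i *\<^sub>R x i) | c. (\<Sum>i<N. (c i)\<^sup>2) \<le> 1}"
  then obtain c where c: "y = norm (\<Sum>i<N. c i *\<^sub>R x i)" "(\<Sum>i<N. (c i)\<^sup>2) \<le> 1" by blast
  have "\<bar>c i\<bar> \<le> 1" if "i < N" for i
  proof -
    have "(c i)\<^sup>2 \<le> (\<Sum>i<N. (c i)\<^sup>2)" by (rule member_le_sum) (use that in auto)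
    with c(2) show ?thesis using abs_square_le_1 by fastforce
  qed
  then have "(\<Sum>i<N. norm (c i *\<^sub>R x i)) \<le> (\<Sum>i<N. norm (x i))"
    by (auto intro!: sum_mono simp: mult_left_le_one_le)
  with c(1) show "y \<le> (\<Sum>i<N. norm (x i))" by (metis norm_sum order_trans)
qed

lemma norm_sum_le_sigma_max:
  fixes x :: "nat \<Rightarrow> 'a::euclidean_space"
  assumes "(\<Sum>i<N. (c i)\<^sup>2) \<le> 1"
  shows "norm (\<Sum>i<N. c i *\<^sub>R x i) \<le> sigma_max x N"
  unfolding sigma_max_def using assms by (intro cSup_upper[OF _ bdd_above_sigma_max_set]) blast

lemma norm_sum_squared_le_sigma_max:
  fixes x :: "nat \<Rightarrow> 'a::euclidean_space"
  shows "(norm (\<Sum>i<N. c i *\<^sub>R x i))\<^sup>2 \<le> (sigma_max x N)\<^sup>2 * (\<Sum>i<N. (c i)\<^sup>2)"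
proof (cases "(\<Sum>i<N. (c i)\<^sup>2) = 0")
  case True
  then have "\<forall>i<N. c i = 0" by (simp add: sum_nonneg_eq_0_iff)
  then show ?thesis by simp
next
  case False
  define r where "r = sqrt (\<Sum>i<N. (c i)\<^sup>2)"
  have r_pos: "r > 0" and r_sq: "r\<^sup>2 = (\<Sum>i<N. (c i)\<^sup>2)"
    using False sum_nonneg[of "{..<N}" "\<lambda>i. (c i)\<^sup>2"] by (auto simp: r_def)
  have "(\<Sum>i<N. (c i / r)\<^sup>2) = 1"
    using r_pos r_sq False by (simp add: power_divide flip: sum_divide_distrib)
  then have "norm (\<Sum>i<N. (c i / r) *\<^sub>R x i) \<le> sigma_max x N"
    by (intro norm_sum_le_sigma_max) simp
  moreover have "(\<Sum>i<N. c i *\<^sub>R x i) = r *\<^sub>R (\<Sum>i<N. (c i / r) *\<^sub>R x i)"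
    using r_pos by (simp add: scaleR_sum_right)
  ultimately have "norm (\<Sum>i<N. c i *\<^sub>R x i) \<le> r * sigma_max x N"
    using r_pos by (simp add: mult_left_mono)
  then have "(norm (\<Sum>i<N. c i *\<^sub>R x i))\<^sup>2 \<le> (r * sigma_max x N)\<^sup>2"
    by (intro power_mono) auto
  then show ?thesis by (simp add: power_mult_distrib r_sq mult.commute)
qed

lemma norm_subset_sum_squared_le_sigma_max:
  fixes x :: "nat \<Rightarrow> 'a::euclidean_space"
  assumes "B \<subseteq> {..<N}"
  shows "(norm (\<Sum>i\<in>B. c i *\<^sub>R x i))\<^sup>2 \<le> (sigma_max x N)\<^sup>2 * (\<Sum>i\<in>B. (c i)\<^sup>2)"
proof -
  define c' where "c' i = (if i \<in> B then c i else 0)" for i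
  have "(\<Sum>i\<in>B. c i *\<^sub>R x i) = (\<Sum>i<N. c' i *\<^sub>R x i)"
    using assms by (intro sum.mono_neutral_cong_left) (auto simp: c'_def)
  moreover have "(\<Sum>i\<in>B. (c i)\<^sup>2) = (\<Sum>i<N. (c' i)\<^sup>2)"
    using assms by (intro sum.mono_neutral_cong_left) (auto simp: c'_def)
  ultimately show ?thesis using norm_sum_squared_le_sigma_max by metis
qed

lemma sum_batches_norm_squared_le:
  fixes x :: "nat \<Rightarrow> 'a::euclidean_space"
  assumes "1 \<le> b" "b \<le> N"
  shows "(\<Sum>B\<in>batches N b. (norm (\<Sum>i\<in>B. c i *\<^sub>R x i))\<^sup>2)
           \<le> real (card (batches N b)) * real b / real N * (sigma_max x N)\<^sup>2 * (\<Sum>i<N. (c i)\<^sup>2)"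
proof -
  have "(\<Sum>B\<in>batches N b. (norm (\<Sum>i\<in>B. c i *\<^sub>R x i))\<^sup>2)
          \<le> (\<Sum>B\<in>batches N b. (sigma_max x N)\<^sup>2 * (\<Sum>i\<in>B. (c i)\<^sup>2))"
    by (intro sum_mono norm_subset_sum_squared_le_sigma_max) (auto simp: batches_def)
  also have "\<dots> = (sigma_max x N)\<^sup>2 * (\<Sum>B\<in>batches N b. \<Sum>i\<in>B. (c i)\<^sup>2)"
    by (simp add: sum_distrib_left)
  finally show ?thesis by (simp add: sum_batches_sum[OF assms] mult_ac)
qed

lemma norm_sum_squared_le_card_sum_norm_squared:
  fixes f :: "'b \<Rightarrow> 'a::real_normed_vector"
  shows "(norm (\<Sum>s\<in>S. f s))\<^sup>2 \<le> real (card S) * (\<Sum>s\<in>S. (norm (f s))\<^sup>2)"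
proof -
  have "(norm (\<Sum>s\<in>S. f s))\<^sup>2 \<le> (\<Sum>s\<in>S. norm (f s))\<^sup>2"
    by (intro power_mono norm_sum) simp
  also have "\<dots> \<le> real (card S) * (\<Sum>s\<in>S. (norm (f s))\<^sup>2)"
    using sum_squared_le_sum_of_squares[of "\<lambda>s. norm (f s)" S] by (simp add: mult.commute)
  finally show ?thesis .
qed

lemma margin_constraints_feasible:
  fixes x :: "nat \<Rightarrow> 'a::real_inner"
  assumes "\<exists>v. \<forall>i<N. v \<bullet> x i > 0"
  shows "\<exists>u. \<forall>i<N. 1 \<le> u \<bullet> x i"
proof -
  obtain v where v: "\<forall>i<N. v \<bullet> x i > 0" using assms by blast
  define t where "t = (\<Sum>i<N. 1 / (v \<bullet> x i))"
  have "1 \<le> (t *\<^sub>R v) \<bullet> x i" if "i < N" for i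
  proof -
    have "1 / (v \<bullet> x i) \<le> t" unfolding t_def by (rule member_le_sum) (use that v in auto)
    with v that show ?thesis by (simp add: field_simps)
  qed
  then show ?thesis by blast
qed

lemma margin_constraints_eq_INT:
  "{u. \<forall>i<N. 1 \<le> u \<bullet> x i} = (\<Inter>i<N. {u. x i \<bullet> u \<ge> 1})"
  by (auto simp: inner_commute)

lemma closed_margin_constraints:
  fixes x :: "nat \<Rightarrow> 'a::euclidean_space"
  shows "closed {u. \<forall>i<N. 1 \<le> u \<bullet> x i}"
  unfolding margin_constraints_eq_INT by (intro closed_INT) (auto intro: closed_halfspace_ge)

lemma convex_margin_constraints:
  fixes x :: "nat \<Rightarrow> 'a::euclidean_space"
  shows "convex {u. \<forall>i<N. 1 \<le> u \<bullet> x i}"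
  unfolding margin_constraints_eq_INT by (intro convex_INT) (auto intro: convex_halfspace_ge)

lemma max_margin_eq_closest_point:
  fixes x :: "nat \<Rightarrow> 'a::euclidean_space"
  assumes "\<exists>u. \<forall>i<N. 1 \<le> u \<bullet> x i"
  shows "max_margin x N = closest_point {u. \<forall>i<N. 1 \<le> u \<bullet> x i} 0"
proof -
  define C where "C = {u. \<forall>i<N. 1 \<le> u \<bullet> x i}"
  have "closed C" "convex C" "C \<noteq> {}"
    using assms closed_margin_constraints convex_margin_constraints by (auto simp: C_def)
  then have p: "closest_point C 0 \<in> C" "\<And>u. u \<in> C \<Longrightarrow> norm (closest_point C 0) \<le> norm u"
    and unique: "\<And>u. u \<in> C \<Longrightarrow> \<forall>z\<in>C. norm u \<le> norm z \<Longrightarrow> u = closest_point C 0"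
    using closest_point_in_set closest_point_le[of C _ 0] closest_point_unique[of C _ 0] by auto
  have "max_margin x N = closest_point C 0"
    unfolding max_margin_def
  proof (rule the_equality)
    show "(\<forall>i<N. closest_point C 0 \<bullet> x i \<ge> 1) \<and>
          (\<forall>v. (\<forall>i<N. v \<bullet> x i \<ge> 1) \<longrightarrow> (norm (closest_point C 0))\<^sup>2 \<le> (norm v)\<^sup>2)"
      using p by (auto simp: C_def intro: power_mono)
  next
    fix u assume "(\<forall>i<N. u \<bullet> x i \<ge> 1) \<and> (\<forall>v. (\<forall>i<N. v \<bullet> x i \<ge> 1) \<longrightarrow> (norm u)\<^sup>2 \<le> (norm v)\<^sup>2)"
    then show "u = closest_point C 0"
      by (intro unique) (auto simp: C_def intro: power2_le_imp_le)
  qed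
  then show ?thesis by (simp add: C_def)
qed

lemma max_margin_feasible:
  fixes x :: "nat \<Rightarrow> 'a::euclidean_space"
  assumes "\<exists>v. \<forall>i<N. v \<bullet> x i > 0" "i < N"
  shows "1 \<le> max_margin x N \<bullet> x i"
proof -
  have "\<exists>u. \<forall>i<N. 1 \<le> u \<bullet> x i" by (rule margin_constraints_feasible[OF assms(1)])
  then have "max_margin x N \<in> {u. \<forall>i<N. 1 \<le> u \<bullet> x i}"
    by (simp only: max_margin_eq_closest_point)
       (intro closest_point_in_set closed_margin_constraints, auto)
  with assms(2) show ?thesis by blast
qed

lemma sum_power2_le_power2_sum:
  fixes a :: "'b \<Rightarrow> real"
  assumes "finite I" "\<And>i. i \<in> I \<Longrightarrow> 0 \<le> a i"
  shows "(\<Sum>i\<in>I. (a i)\<^sup>2) \<le> (\<Sum>i\<in>I. a i)\<^sup>2"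
proof -
  have "(\<Sum>i\<in>I. (a i)\<^sup>2) \<le> (\<Sum>i\<in>I. a i * (\<Sum>j\<in>I. a j))"
    using assms by (auto simp: power2_eq_square intro!: sum_mono mult_left_mono member_le_sum)
  also have "\<dots> = (\<Sum>i\<in>I. a i)\<^sup>2" by (simp add: power2_eq_square sum_distrib_right)
  finally show ?thesis .
qed

lemma sum_power2_le_max_margin:
  fixes x :: "nat \<Rightarrow> 'a::euclidean_space"
  assumes A1: "\<exists>v. \<forall>i<N. v \<bullet> x i > 0" and nonneg: "\<And>i. i < N \<Longrightarrow> 0 \<le> a i"
  shows "(\<Sum>i<N. (a i)\<^sup>2) \<le> (norm (max_margin x N))\<^sup>2 * (norm (\<Sum>i<N. a i *\<^sub>R x i))\<^sup>2"
proof -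
  let ?u = "max_margin x N" and ?v = "\<Sum>i<N. a i *\<^sub>R x i"
  have "(\<Sum>i<N. a i) \<le> (\<Sum>i<N. a i * (?u \<bullet> x i))"
    using nonneg max_margin_feasible[OF A1]
    by (intro sum_mono) (metis lessThan_iff mult.right_neutral mult_left_mono)
  also have "\<dots> = ?u \<bullet> ?v" by (simp add: inner_sum_right mult.commute)
  finally have "(\<Sum>i<N. a i)\<^sup>2 \<le> (?u \<bullet> ?v)\<^sup>2"
    using nonneg by (intro power_mono) (auto intro: sum_nonneg)
  also have "\<dots> \<le> (norm ?u)\<^sup>2 * (norm ?v)\<^sup>2"
    using Cauchy_Schwarz_ineq[of ?u ?v] by (simp add: power2_norm_eq_inner)
  finally show ?thesis
    using sum_power2_le_power2_sum[of "{..<N}" a] nonneg by simp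
qed

lemma mean_batch_sum_norm_squared_ge:
  fixes x :: "nat \<Rightarrow> 'a::real_normed_vector"
  assumes "1 \<le> b" "b \<le> N"
  shows "(norm (\<Sum>i<N. d i *\<^sub>R x i) / real N)\<^sup>2
           \<le> (\<Sum>B\<in>batches N b. (norm (\<Sum>i\<in>B. d i *\<^sub>R x i))\<^sup>2)
               / ((real b)\<^sup>2 * real (card (batches N b)))"
proof -
  define K where "K = real (card (batches N b))"
  have "K > 0"
    using finite_batches batches_nonempty[OF assms(2)] by (simp add: K_def card_gt_0_iff)
  have "(K * real b / real N)\<^sup>2 * (norm (\<Sum>i<N. d i *\<^sub>R x i))\<^sup>2
          = (norm (\<Sum>B\<in>batches N b. \<Sum>i\<in>B. d i *\<^sub>R x i))\<^sup>2"
    unfolding K_def sum_batches_sum[OF assms] by (simp add: power_mult_distrib power_divide)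
  also have "\<dots> \<le> K * (\<Sum>B\<in>batches N b. (norm (\<Sum>i\<in>B. d i *\<^sub>R x i))\<^sup>2)"
    unfolding K_def by (rule norm_sum_squared_le_card_sum_norm_squared)
  finally show ?thesis
    using assms \<open>K > 0\<close> by (simp add: K_def field_simps power2_eq_square)
qed

lemma mean_batch_sum_norm_squared_le:
  fixes x :: "nat \<Rightarrow> 'a::euclidean_space"
  assumes A1: "\<exists>v. \<forall>i<N. v \<bullet> x i > 0" and nonpos: "\<And>i. i < N \<Longrightarrow> d i \<le> 0"
    and "1 \<le> b" "b \<le> N"
  shows "(\<Sum>B\<in>batches N b. (norm (\<Sum>i\<in>B. d i *\<^sub>R x i))\<^sup>2)
               / ((real b)\<^sup>2 * real (card (batches N b)))
           \<le> real N * (sigma_max x N)\<^sup>2 * (norm (max_margin x N))\<^sup>2 / real b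
               * (norm (\<Sum>i<N. d i *\<^sub>R x i) / real N)\<^sup>2"
proof -
  define K where "K = real (card (batches N b))"
  have "K > 0"
    using finite_batches batches_nonempty[OF assms(4)] by (simp add: K_def card_gt_0_iff)
  have "(\<Sum>B\<in>batches N b. (norm (\<Sum>i\<in>B. d i *\<^sub>R x i))\<^sup>2)
          \<le> K * real b / real N * (sigma_max x N)\<^sup>2 * (\<Sum>i<N. (- d i)\<^sup>2)"
    using sum_batches_norm_squared_le[OF assms(3,4)] by (simp add: K_def)
  also have "\<dots> \<le> K * real b / real N * (sigma_max x N)\<^sup>2
                    * ((norm (max_margin x N))\<^sup>2 * (norm (\<Sum>i<N. d i *\<^sub>R x i))\<^sup>2)"
    using sum_power2_le_max_margin[OF A1, of "\<lambda>i. - d i"] nonpos \<open>K > 0\<close>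
    by (intro mult_left_mono) (auto simp: sum_negf)
  finally show ?thesis
    using assms \<open>K > 0\<close> by (simp add: K_def field_simps power2_eq_square)
qed

theorem mainTheorem14:
  fixes x :: "nat \<Rightarrow> real ^ 'd" and N b :: nat and l :: "real \<Rightarrow> real" and w :: "real ^ 'd"
  assumes A1: "\<exists>v. \<forall>i<N. v \<bullet> x i > 0"
    and diff: "\<And>t. l differentiable (at t)"
    and neg: "\<And>t. deriv l t < 0"
    and b_pos: "1 \<le> b" and b_le: "b \<le> N"
  shows "(norm (grad (full_loss l x N) w))\<^sup>2
           \<le> measure_pmf.expectation (pmf_of_set (batches N b))
                (\<lambda>B. (norm (grad (batch_loss l x b B) w))\<^sup>2)
       \<and> measure_pmf.expectation (pmf_of_set (batches N b))
                (\<lambda>B. (norm (grad (batch_loss l x b B) w))\<^sup>2)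
           \<le> real N * (sigma_max x N)\<^sup>2 / ((margin x N)\<^sup>2 * real b)
               * (norm (grad (full_loss l x N) w))\<^sup>2"
proof -
  define d where "d i = deriv l (w \<bullet> x i)" for i
  have grad_full: "grad (full_loss l x N) w = (1 / real N) *\<^sub>R (\<Sum>i<N. d i *\<^sub>R x i)"
    unfolding full_loss_def[abs_def] d_def by (rule grad_scaled_sum_comp_inner[OF diff])
  have "grad (batch_loss l x b B) w = (1 / real b) *\<^sub>R (\<Sum>i\<in>B. d i *\<^sub>R x i)" for B
    unfolding batch_loss_def[abs_def] d_def by (rule grad_scaled_sum_comp_inner[OF diff])
  then have expectation:
    "measure_pmf.expectation (pmf_of_set (batches N b)) (\<lambda>B. (norm (grad (batch_loss l x b B) w))\<^sup>2)
       = (\<Sum>B\<in>batches N b. (norm (\<Sum>i\<in>B. d i *\<^sub>R x i))\<^sup>2)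
           / ((real b)\<^sup>2 * real (card (batches N b)))"
    using finite_batches batches_nonempty[OF b_le]
    by (simp add: integral_pmf_of_set power_divide sum_divide_distrib mult.commute)
  have "\<And>i. d i \<le> 0" using neg by (simp add: d_def less_imp_le)
  then show ?thesis
    unfolding expectation grad_full
    using mean_batch_sum_norm_squared_ge[OF b_pos b_le, where x=x and d=d]
      mean_batch_sum_norm_squared_le[OF A1 _ b_pos b_le, where d=d]
    by (simp add: margin_def power_divide)
qed

end
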